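(* Let $\mu>0$ and $d\in(0,1)$. For integers $N,L\ge1$ let $M=N+L$ and let $(\tau_1,\dots,\tau_M)\in\{0,1\}^M$ be uniformly distributed among configurations with $\sum_i\tau_i=N$ (the stationary distribution of TASEP on a ring of $M$ sites with $N$ particles), with $\tau_{M+1}=\tau_1$. Define $\phi=\frac{\mu}{M}\sum_{i=1}^M\tau_i(1-\tau_{i+1})$. Then as $N,L\to\infty$ with $N/(N+L)\to d$, $$L\cdot\mathrm{Var}(\phi)\longrightarrow \mu^2\,d^2(1-d)^3,$$ i.e. $\mathrm{Var}(\phi)=\frac{1-d}{L}\,d^2(1-d)^2\mu^2+o(1/L)$. *)

theory Defs
  imports "HOL-Probability.Probability"
begin

text \<open>TASEP configurations on a ring of M = N + L sites (indexed 0..M-1) with exactly N particles.\<close>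
definition tasep_configs :: "nat \<Rightarrow> nat \<Rightarrow> bool list set" where
  "tasep_configs N L = {xs. length xs = N + L \<and> count_list xs True = N}"

definition tasep_stationary :: "nat \<Rightarrow> nat \<Rightarrow> bool list pmf" where
  "tasep_stationary N L = pmf_of_set (tasep_configs N L)"

definition tasep_phi :: "real \<Rightarrow> nat \<Rightarrow> nat \<Rightarrow> bool list \<Rightarrow> real" where
  "tasep_phi \<mu> N L xs =
     (let M = N + L in
      \<mu> / real M * (\<Sum>i<M. (if xs ! i then 1 else 0) * (1 - (if xs ! ((i + 1) mod M) then 1 else 0))))"

end

theory Submission
  imports Defs
begin

(*
  Write M = N + L and call a site i a descent of a ring configuration xs
  if xs!i holds and xs!((i+1) mod M) does not; then phi = mu/M * J, where J counts descents.
  Under the uniform distribution on configurations with N particles, prescribing particles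
  on a set P of sites and holes on a disjoint set Q leaves
  (M - |P| - |Q|) choose (N - |P|) configurations.  Hence every site is a descent in
  (M-2) choose (N-1) configurations, two non-adjacent sites simultaneously in
  (M-4) choose (N-2) configurations, and two adjacent sites never.  Summing over pairs of
  sites gives the first two moments of J, and binomial absorption identities turn them into
    E J = N L/(M-1),   E J^2 = N L/(M-1) + N(N-1) L(L-1)/((M-1)(M-2)),
  so that Var phi = mu^2 N(N-1) L(L-1) / (M^2 (M-1)^2 (M-2)) exactly (for N, L >= 2).
*)

section \<open>Counting configurations with a prescribed pattern\<close>

lemma count_list_True_eq_card: "count_list xs True = card {i. i < length xs \<and> xs ! i}"
  by (simp add: count_list_eq_length_filter length_filter_conv_card)

text \<open>Fixing particles on P and holes on Q, the remaining N - |P| particles are placed freely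
  on the M - |P| - |Q| remaining sites.\<close>
lemma card_configs_with_pattern:
  assumes P: "P \<subseteq> {..<N+L}" and Q: "Q \<subseteq> {..<N+L}" and PQ: "P \<inter> Q = {}"
    and card_P: "card P \<le> N"
  shows "card {xs \<in> tasep_configs N L. (\<forall>i\<in>P. xs!i) \<and> (\<forall>i\<in>Q. \<not> xs!i)}
         = (N + L - card P - card Q) choose (N - card P)"
proof -
  define M where "M = N + L"
  let ?A = "{xs \<in> tasep_configs N L. (\<forall>i\<in>P. xs!i) \<and> (\<forall>i\<in>Q. \<not> xs!i)}"
  let ?D = "{..<M} - P - Q"
  let ?B = "{B. B \<subseteq> ?D \<and> card B = N - card P}"
  define extra where "extra xs = {i. i < M \<and> xs!i} - P" for xs :: "bool list"
  define config where "config B = map (\<lambda>i. i \<in> B \<union> P) [0..<M]" for B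
  have fin_P: "finite P" and fin_Q: "finite Q"
    using P Q finite_subset by (auto simp: M_def)
  have "bij_betw extra ?A ?B"
  proof (rule bij_betw_byWitness[where f'=config])
    show "\<forall>xs\<in>?A. config (extra xs) = xs"
      by (auto simp: config_def extra_def tasep_configs_def M_def list_eq_iff_nth_eq)
    show "\<forall>B\<in>?B. extra (config B) = B"
      by (auto simp: config_def extra_def)
    show "extra ` ?A \<subseteq> ?B"
    proof
      fix B assume "B \<in> extra ` ?A"
      then obtain xs where xs: "xs \<in> ?A" and B: "B = extra xs" by blast
      have "{i. i < M \<and> xs!i} = B \<union> P" "B \<inter> P = {}" "finite B"
        using xs P by (auto simp: B extra_def tasep_configs_def M_def)
      moreover have "card {i. i < M \<and> xs!i} = N"
        using xs by (clarsimp simp: tasep_configs_def count_list_True_eq_card M_def)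
      ultimately have "card B = N - card P" using fin_P by (simp add: card_Un_disjoint)
      moreover have "B \<subseteq> ?D" using xs by (auto simp: B extra_def)
      ultimately show "B \<in> ?B" by simp
    qed
    show "config ` ?B \<subseteq> ?A"
    proof
      fix xs assume "xs \<in> config ` ?B"
      then obtain B where B: "B \<in> ?B" and xs: "xs = config B" by blast
      have "{i. i < length xs \<and> xs!i} = B \<union> P" "B \<inter> P = {}" "finite B"
        using B P by (auto simp: xs config_def M_def intro: finite_subset)
      then have "count_list xs True = N"
        using B card_P fin_P by (simp add: count_list_True_eq_card card_Un_disjoint)
      moreover have "\<forall>i\<in>P. xs!i" "\<forall>i\<in>Q. \<not> xs!i"
        using P Q B PQ by (force simp: xs config_def M_def)+
      ultimately show "xs \<in> ?A" by (simp add: xs config_def tasep_configs_def M_def)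
    qed
  qed
  then have "card ?A = card ?D choose (N - card P)"
    by (simp add: bij_betw_same_card n_subsets)
  moreover have "card ?D = M - card P - card Q"
  proof -
    have "card ?D = card ({..<M} - P) - card Q"
      using Q PQ fin_Q by (subst card_Diff_subset) (auto simp: M_def)
    also have "card ({..<M} - P) = M - card P"
      using P fin_P by (simp add: card_Diff_subset M_def)
    finally show ?thesis .
  qed
  ultimately show ?thesis by (simp add: M_def)
qed

corollary card_tasep_configs: "card (tasep_configs N L) = (N + L) choose N"
  using card_configs_with_pattern[of "{}" N L "{}"] by simp

section \<open>Descents of a ring configuration\<close>

definition descent_at :: "nat \<Rightarrow> bool list \<Rightarrow> nat \<Rightarrow> bool" where
  "descent_at M xs i \<longleftrightarrow> xs ! i \<and> \<not> xs ! ((i + 1) mod M)"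

definition descent_count :: "nat \<Rightarrow> bool list \<Rightarrow> real" where
  "descent_count M xs = (\<Sum>i<M. if descent_at M xs i then 1 else 0)"

lemma tasep_phi_eq_descent_count:
  "tasep_phi \<mu> N L = (\<lambda>xs. \<mu> / real (N + L) * descent_count (N + L) xs)"
  unfolding tasep_phi_def descent_count_def descent_at_def Let_def
  by (intro ext arg_cong[where f = "\<lambda>s. _ * s"] sum.cong) auto

lemma Suc_mod_eq: "(i::nat) < M \<Longrightarrow> Suc i mod M = (if Suc i = M then 0 else Suc i)"
  by auto

lemma Suc_mod_neq: "(i::nat) < M \<Longrightarrow> 2 \<le> M \<Longrightarrow> (i + 1) mod M \<noteq> i"
  by (simp add: Suc_mod_eq)

lemma Suc_mod_inj: "(i::nat) < M \<Longrightarrow> j < M \<Longrightarrow> (i + 1) mod M = (j + 1) mod M \<Longrightarrow> i = j"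
  by (simp add: Suc_mod_eq split: if_splits)

lemma sum_over_ring_except_neighbours:
  assumes M: "3 \<le> M" and i: "i < M"
  shows "(\<Sum>j<M. if j = i then a else if j = (i + 1) mod M \<or> (j + 1) mod M = i then 0 else b)
         = a + (real M - 3) * (b::real)"
proof -
  define pred where "pred = (if i = 0 then M - 1 else i - 1)"
  define succ where "succ = (i + 1) mod M"
  have pred: "(j + 1) mod M = i \<longleftrightarrow> j = pred" if "j < M" for j
    using that i by (auto simp: Suc_mod_eq pred_def)
  have distinct: "i \<noteq> succ" "i \<noteq> pred" "succ \<noteq> pred"
    using M i by (auto simp: succ_def pred_def Suc_mod_eq)
  have sub: "{i, succ, pred} \<subseteq> {..<M}"
    using M i by (auto simp: succ_def pred_def)
  have "(\<Sum>j<M. if j = i then a else if j = (i + 1) mod M \<or> (j + 1) mod M = i then 0 else b)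
      = (\<Sum>j<M. (if j = i then a else 0) + (if j \<in> {..<M} - {i, succ, pred} then b else 0))"
    by (rule sum.cong) (use pred distinct in \<open>auto simp: succ_def\<close>)
  also have "\<dots> = a + real (card ({..<M} - {i, succ, pred})) * b"
  proof -
    have "(\<Sum>j<M. if j \<in> {..<M} - {i, succ, pred} then b else 0) = (\<Sum>j\<in>{..<M} - {i, succ, pred}. b)"
      by (rule sum.mono_neutral_cong_right) auto
    then show ?thesis using i by (simp add: sum.distrib)
  qed
  also have "card ({..<M} - {i, succ, pred}) = M - 3"
    using sub distinct by (simp add: card_Diff_subset)
  finally show ?thesis
    using M by simp
qed

section \<open>The first two moments of the number of descents\<close>

lemma finite_tasep_configs: "finite (tasep_configs N L)"
  by (rule finite_subset[OF _ finite_lists_length_eq[of UNIV "N + L"]])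
     (auto simp: tasep_configs_def)

lemma sum_indicator_eq_card:
  "finite C \<Longrightarrow> (\<Sum>x\<in>C. if P x then 1 else 0 :: real) = real (card {x\<in>C. P x})"
  by (simp add: sum.If_cases Collect_conj_eq Int_commute)

lemma card_descent_at:
  assumes "1 \<le> N" "1 \<le> L" "i < N + L"
  shows "card {xs \<in> tasep_configs N L. descent_at (N + L) xs i} = (N + L - 2) choose (N - 1)"
proof -
  have "(i + 1) mod (N + L) \<noteq> i" "(i + 1) mod (N + L) < N + L"
    using assms Suc_mod_neq[of i "N + L"] by auto
  then have "card {xs \<in> tasep_configs N L. (\<forall>k\<in>{i}. xs!k) \<and> (\<forall>k\<in>{(i + 1) mod (N + L)}. \<not> xs!k)}
      = (N + L - 2) choose (N - 1)"
    using assms by (subst card_configs_with_pattern) (auto simp: numeral_2_eq_2)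
  then show ?thesis by (simp add: descent_at_def)
qed

text \<open>Two adjacent sites are never simultaneously descents; for two non-adjacent sites this
  amounts to prescribing two particles and two holes.\<close>
lemma card_two_descents:
  assumes N: "2 \<le> N" and L: "2 \<le> L" and i: "i < N + L" and j: "j < N + L" and "i \<noteq> j"
  shows "card {xs \<in> tasep_configs N L. descent_at (N + L) xs i \<and> descent_at (N + L) xs j}
         = (if j = (i + 1) mod (N + L) \<or> (j + 1) mod (N + L) = i then 0
            else (N + L - 4) choose (N - 2))"
proof (cases "j = (i + 1) mod (N + L) \<or> (j + 1) mod (N + L) = i")
  case True
  then have "{xs \<in> tasep_configs N L. descent_at (N + L) xs i \<and> descent_at (N + L) xs j} = {}"
    by (auto simp: descent_at_def)
  then show ?thesis using True by (simp only: card.empty if_True)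
next
  case False
  define si where "si = (i + 1) mod (N + L)"
  define sj where "sj = (j + 1) mod (N + L)"
  have "si \<noteq> sj" "si \<noteq> i" "sj \<noteq> j" "si < N + L" "sj < N + L"
    using Suc_mod_inj[OF i j] Suc_mod_neq[OF i] Suc_mod_neq[OF j] N L \<open>i \<noteq> j\<close>
    by (auto simp: si_def sj_def)
  then have "card {xs \<in> tasep_configs N L. (\<forall>k\<in>{i, j}. xs!k) \<and> (\<forall>k\<in>{si, sj}. \<not> xs!k)}
      = (N + L - 4) choose (N - 2)"
    using N L i j \<open>i \<noteq> j\<close> False
    by (subst card_configs_with_pattern) (auto simp: si_def sj_def numeral_eq_Suc)
  moreover have "{xs \<in> tasep_configs N L. (\<forall>k\<in>{i, j}. xs!k) \<and> (\<forall>k\<in>{si, sj}. \<not> xs!k)}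
      = {xs \<in> tasep_configs N L. descent_at (N + L) xs i \<and> descent_at (N + L) xs j}"
    by (auto simp: descent_at_def si_def sj_def)
  ultimately show ?thesis using False by simp
qed

lemma sum_descent_count:
  assumes "1 \<le> N" "1 \<le> L"
  shows "(\<Sum>xs\<in>tasep_configs N L. descent_count (N + L) xs)
         = real (N + L) * real ((N + L - 2) choose (N - 1))"
proof -
  have "(\<Sum>xs\<in>tasep_configs N L. descent_count (N + L) xs)
      = (\<Sum>i<N + L. \<Sum>xs\<in>tasep_configs N L. if descent_at (N + L) xs i then 1 else 0)"
    unfolding descent_count_def by (rule sum.swap)
  also have "\<dots> = (\<Sum>i<N + L. real ((N + L - 2) choose (N - 1)))"
    using assms by (intro sum.cong) (simp_all add: sum_indicator_eq_card finite_tasep_configs card_descent_at)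
  finally show ?thesis by simp
qed

text \<open>Expanding the square into pairs of sites: the diagonal contributes the single-site
  count, adjacent pairs nothing, and each of the M - 3 other partners of a site the
  two-site count.\<close>
lemma sum_descent_count_squared:
  assumes N: "2 \<le> N" and L: "2 \<le> L"
  defines "M \<equiv> N + L"
  shows "(\<Sum>xs\<in>tasep_configs N L. (descent_count M xs)^2)
         = real M * (real ((M - 2) choose (N - 1)) + (real M - 3) * real ((M - 4) choose (N - 2)))"
proof -
  let ?C = "tasep_configs N L"
  let ?A = "real ((M - 2) choose (N - 1))" and ?B = "real ((M - 4) choose (N - 2))"
  have pairs: "(\<Sum>xs\<in>?C. if descent_at M xs i \<and> descent_at M xs j then 1 else 0)
      = (if j = i then ?A else if j = (i + 1) mod M \<or> (j + 1) mod M = i then 0 else ?B)"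
    if "i < M" "j < M" for i j
    using that N L card_descent_at[of N L i] card_two_descents[of N L i j]
    by (simp add: sum_indicator_eq_card finite_tasep_configs M_def)
  have "(\<Sum>xs\<in>?C. (descent_count M xs)^2)
      = (\<Sum>xs\<in>?C. \<Sum>i<M. \<Sum>j<M. if descent_at M xs i \<and> descent_at M xs j then 1 else 0)"
    unfolding descent_count_def power2_eq_square sum_product by (auto intro!: sum.cong)
  also have "\<dots> = (\<Sum>i<M. \<Sum>j<M. \<Sum>xs\<in>?C. if descent_at M xs i \<and> descent_at M xs j then 1 else 0)"
    by (simp add: sum.swap[of _ ?C])
  also have "\<dots> = (\<Sum>i<M. \<Sum>j<M. if j = i then ?A else if j = (i + 1) mod M \<or> (j + 1) mod M = i then 0 else ?B)"
    by (intro sum.cong refl) (simp add: pairs)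
  also have "\<dots> = (\<Sum>i<M. ?A + (real M - 3) * ?B)"
    using N L by (intro sum.cong refl sum_over_ring_except_neighbours) (auto simp: M_def)
  finally show ?thesis by simp
qed

lemma binomial_absorb_particle_hole:
  assumes "1 \<le> N" "1 \<le> L"
  shows "N * L * ((N + L) choose N) = (N + L) * (N + L - 1) * ((N + L - 2) choose (N - 1))"
proof -
  obtain n l where N: "N = Suc n" and L: "L = Suc l"
    using assms by (metis Suc_le_D One_nat_def)
  have particle: "Suc n * (Suc (Suc (n + l)) choose Suc n) = Suc (Suc (n + l)) * (Suc (n + l) choose n)"
    by (rule Suc_times_binomial)
  have hole: "Suc l * (Suc (n + l) choose n) = Suc (n + l) * ((n + l) choose n)"
    using binomial_absorb_comp[of "Suc (n + l)" n] by (simp add: Suc_diff_le)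
  have "N * L * ((N + L) choose N) = Suc l * (Suc n * (Suc (Suc (n + l)) choose Suc n))"
    by (simp add: N L algebra_simps del: binomial_Suc_Suc)
  also have "\<dots> = Suc (Suc (n + l)) * (Suc l * (Suc (n + l) choose n))"
    by (simp only: particle mult_ac)
  also have "\<dots> = (N + L) * (N + L - 1) * ((N + L - 2) choose (N - 1))"
    by (simp only: hole) (simp add: N L algebra_simps del: binomial_Suc_Suc)
  finally show ?thesis .
qed

lemma mean_descent_count:
  assumes N: "1 \<le> N" and L: "1 \<le> L"
  shows "(\<Sum>xs\<in>tasep_configs N L. descent_count (N + L) xs) / real (card (tasep_configs N L))
         = real N * real L / (real (N + L) - 1)"
proof -
  have absorb: "real N * real L * real ((N + L) choose N)
      = real (N + L) * (real (N + L) - 1) * real ((N + L - 2) choose (N - 1))"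
    using arg_cong[OF binomial_absorb_particle_hole[OF N L], of real] N L
    by simp
  have "real ((N + L) choose N) > 0" "real (N + L) - 1 \<noteq> 0"
    using N L by auto
  then show ?thesis
    unfolding sum_descent_count[OF N L] card_tasep_configs using absorb by (simp add: field_simps)
qed

lemma second_moment_descent_count:
  assumes N: "2 \<le> N" and L: "2 \<le> L"
  shows "(\<Sum>xs\<in>tasep_configs N L. (descent_count (N + L) xs)^2) / real (card (tasep_configs N L))
         = real N * real L / (real (N + L) - 1)
           + real N * (real N - 1) * real L * (real L - 1) / ((real (N + L) - 1) * (real (N + L) - 2))"
proof -
  define M c A B where "M = real (N + L)" and "c = real ((N + L) choose N)"
    and "A = real ((N + L - 2) choose (N - 1))" and "B = real ((N + L - 4) choose (N - 2))"
  have absorb1: "real N * real L * c = M * (M - 1) * A"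
    using arg_cong[OF binomial_absorb_particle_hole[of N L], of real] N L
    by (simp add: c_def M_def A_def)
  have absorb2: "(real N - 1) * (real L - 1) * A = (M - 2) * (M - 3) * B"
    using arg_cong[OF binomial_absorb_particle_hole[of "N - 1" "L - 1"], of real] N L
    by (simp add: c_def M_def A_def B_def numeral_eq_Suc)
  have nonzero: "c > 0" "M - 1 \<noteq> 0" "M - 2 \<noteq> 0"
    using N L by (auto simp: c_def M_def)
  have single_site: "M * A / c = real N * real L / (M - 1)"
    using absorb1 nonzero by (simp add: field_simps)
  have pair_term: "(M - 3) * B = (real N - 1) * (real L - 1) * A / (M - 2)"
    using absorb2 nonzero by (simp add: field_simps)
  have "M * (A + (M - 3) * B) / c = M * A / c + (real N - 1) * (real L - 1) / (M - 2) * (M * A / c)"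
    unfolding pair_term by (simp add: add_divide_distrib distrib_left)
  also have "\<dots> = real N * real L / (M - 1)
      + real N * (real N - 1) * real L * (real L - 1) / ((M - 1) * (M - 2))"
    unfolding single_site by (simp add: mult_ac)
  finally have "M * (A + (M - 3) * B) / c = \<dots>" .
  then show ?thesis
    using N L by (simp add: sum_descent_count_squared card_tasep_configs M_def c_def A_def B_def)
qed

section \<open>The exact variance of phi\<close>

lemma variance_pmf_of_set:
  assumes "finite C" "C \<noteq> {}"
  shows "measure_pmf.variance (pmf_of_set C) f
         = (\<Sum>x\<in>C. (f x)^2) / card C - ((\<Sum>x\<in>C. f x) / card C)^2"
proof -
  define m where "m = (\<Sum>x\<in>C. f x) / card C"
  have card_pos: "real (card C) > 0" using assms by (simp add: card_gt_0_iff)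
  have mean: "measure_pmf.expectation (pmf_of_set C) f = m"
    using assms by (simp add: integral_pmf_of_set m_def)
  have "(\<Sum>x\<in>C. (f x - m)^2) = (\<Sum>x\<in>C. (f x)^2) - (\<Sum>x\<in>C. 2 * m * f x) + card C * m^2"
    by (simp add: power2_diff sum.distrib sum_subtractf mult_ac)
  also have "(\<Sum>x\<in>C. 2 * m * f x) = 2 * m * (\<Sum>x\<in>C. f x)"
    by (simp add: sum_distrib_left)
  also have "(\<Sum>x\<in>C. f x) = card C * m" using card_pos by (simp add: m_def)
  finally have "(\<Sum>x\<in>C. (f x - m)^2) = (\<Sum>x\<in>C. (f x)^2) - card C * m^2"
    by (simp add: power2_eq_square)
  then show ?thesis
    using assms card_pos mean by (simp add: integral_pmf_of_set m_def[symmetric] field_simps)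
qed

lemma descent_moments_difference:
  fixes n l :: real
  assumes "n + l \<noteq> 1" "n + l \<noteq> 2"
  shows "n * l / (n + l - 1) + n * (n - 1) * l * (l - 1) / ((n + l - 1) * (n + l - 2))
           - (n * l / (n + l - 1))^2
         = n * (n - 1) * l * (l - 1) / ((n + l - 1)^2 * (n + l - 2))"
proof -
  define x1 x2 where "x1 = n + l - 1" and "x2 = n + l - 2"
  have "x1 \<noteq> 0" "x2 \<noteq> 0" using assms by (auto simp: x1_def x2_def)
  then have "n * l / x1 + n * (n - 1) * l * (l - 1) / (x1 * x2) - (n * l / x1)^2
      = (n * l * x1 * x2 + n * (n - 1) * l * (l - 1) * x1 - n^2 * l^2 * x2) / (x1^2 * x2)"
    by (simp add: field_simps power2_eq_square)
  also have "n * l * x1 * x2 + n * (n - 1) * l * (l - 1) * x1 - n^2 * l^2 * x2 = n * (n - 1) * l * (l - 1)"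
    by (simp add: x1_def x2_def algebra_simps power2_eq_square)
  finally show ?thesis by (simp add: x1_def x2_def)
qed

lemma variance_tasep_phi:
  assumes N: "2 \<le> N" and L: "2 \<le> L"
  shows "measure_pmf.variance (tasep_stationary N L) (tasep_phi \<mu> N L)
    = \<mu>^2 * (real N * (real N - 1) * real L * (real L - 1))
      / ((real (N + L))^2 * (real (N + L) - 1)^2 * (real (N + L) - 2))"
proof -
  define C where "C = tasep_configs N L"
  define J where "J = descent_count (N + L)"
  define M where "M = real (N + L)"
  define s where "s = \<mu> / M"
  have C: "finite C" "C \<noteq> {}"
    using N L card_tasep_configs[of N L] by (auto simp: C_def finite_tasep_configs)
  have "measure_pmf.variance (pmf_of_set C) (\<lambda>xs. s * J xs)
      = s^2 * ((\<Sum>xs\<in>C. (J xs)^2) / card C - ((\<Sum>xs\<in>C. J xs) / card C)^2)"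
    unfolding variance_pmf_of_set[OF C] power_mult_distrib sum_distrib_left[symmetric]
    by (simp add: field_simps)
  also have "(\<Sum>xs\<in>C. (J xs)^2) / card C - ((\<Sum>xs\<in>C. J xs) / card C)^2
      = real N * (real N - 1) * real L * (real L - 1) / ((M - 1)^2 * (M - 2))"
    using second_moment_descent_count[OF N L] mean_descent_count[of N L] N L
      descent_moments_difference[of "real N" "real L"]
    by (simp add: C_def J_def M_def)
  finally show ?thesis
    by (simp add: tasep_stationary_def tasep_phi_eq_descent_count C_def J_def s_def M_def
        power_divide)
qed

section \<open>The scaling limit\<close>

text \<open>L times the exact variance, as a function of the density r = N/M and of u = 1/M;
  this expression is continuous at u = 0.\<close>
lemma scaled_variance_in_density:
  fixes N L \<mu> :: real
  assumes N: "2 \<le> N" and L: "2 \<le> L"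
  defines "r \<equiv> N / (N + L)" and "u \<equiv> 1 / (N + L)"
  shows "L * (\<mu>^2 * (N * (N - 1) * L * (L - 1)) / ((N + L)^2 * (N + L - 1)^2 * (N + L - 2)))
         = \<mu>^2 * r * (r - u) * (1 - r)^2 * (1 - r - u) / ((1 - u)^2 * (1 - 2 * u))"
proof -
  define M where "M = N + L"
  have nonzero: "M \<noteq> 0" "M - 1 \<noteq> 0" "M - 2 \<noteq> 0" using N L by (auto simp: M_def)
  have particles: "N / M = r" "(N - 1) / M = r - u"
    by (simp_all add: r_def u_def M_def diff_divide_distrib)
  have holes: "L / M = 1 - r" "(L - 1) / M = 1 - r - u"
  proof -
    show hole: "L / M = 1 - r"
      using nonzero(1) unfolding r_def M_def[symmetric] by (simp add: field_simps M_def)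
    show "(L - 1) / M = 1 - r - u"
      unfolding hole[symmetric] u_def M_def by (simp add: diff_divide_distrib)
  qed
  have sites: "(M - 1) / M = 1 - u" "(M - 2) / M = 1 - 2 * u"
    unfolding u_def M_def[symmetric] using nonzero by (simp_all add: diff_divide_distrib)
  have "L * (\<mu>^2 * (N * (N - 1) * L * (L - 1)) / (M^2 * (M - 1)^2 * (M - 2)))
      = \<mu>^2 * (N / M) * ((N - 1) / M) * (L / M)^2 * ((L - 1) / M) / (((M - 1) / M)^2 * ((M - 2) / M))"
  proof -
    have "\<mu>^2 * (N / M) * ((N - 1) / M) * (L / M)^2 * ((L - 1) / M)
        = \<mu>^2 * (N * (N - 1) * L^2 * (L - 1)) / M^5"
      by (simp add: power_divide power2_eq_square eval_nat_numeral)
    moreover have "((M - 1) / M)^2 * ((M - 2) / M) = (M - 1)^2 * (M - 2) / M^3"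
      by (simp add: power_divide eval_nat_numeral)
    moreover have "M^5 = M^2 * M^3" by (simp add: eval_nat_numeral)
    ultimately show ?thesis
      using nonzero by (simp add: power2_eq_square mult_ac)
  qed
  then show ?thesis
    unfolding particles holes sites by (simp add: M_def)
qed

theorem mainTheorem9:
  fixes \<mu> d :: real and N L :: "nat \<Rightarrow> nat"
  assumes "\<mu> > 0" and "0 < d" and "d < 1"
    and "\<And>k. N k \<ge> 1" and "\<And>k. L k \<ge> 1"
    and "filterlim N at_top sequentially" and "filterlim L at_top sequentially"
    and "(\<lambda>k. real (N k) / real (N k + L k)) \<longlonglongrightarrow> d"
  shows "(\<lambda>k. real (L k) *
            measure_pmf.variance (tasep_stationary (N k) (L k)) (tasep_phi \<mu> (N k) (L k)))
         \<longlonglongrightarrow> \<mu>^2 * d^2 * (1 - d)^3"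
proof -
  define r where "r k = real (N k) / real (N k + L k)" for k
  define u where "u k = 1 / real (N k + L k)" for k
  define F where "F r u = \<mu>^2 * r * (r - u) * (1 - r)^2 * (1 - r - u) / ((1 - u)^2 * (1 - 2 * u))"
    for r u :: real
  have "filterlim (\<lambda>k. real (N k) + real (L k)) at_top sequentially"
    using assms(6,7)
    by (intro filterlim_at_top_add_at_top filterlim_compose[OF filterlim_real_sequentially])
  then have "u \<longlonglongrightarrow> 0"
    unfolding u_def of_nat_add
    by (intro tendsto_divide_0[OF tendsto_const] filterlim_at_top_imp_at_infinity)
  then have "(\<lambda>k. F (r k) (u k)) \<longlonglongrightarrow> F d 0"
    using assms(8) unfolding F_def r_def by (intro tendsto_intros) auto
  also have "F d 0 = \<mu>^2 * d^2 * (1 - d)^3"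
    by (simp add: F_def power2_eq_square power3_eq_cube)
  finally have limit: "(\<lambda>k. F (r k) (u k)) \<longlonglongrightarrow> \<mu>^2 * d^2 * (1 - d)^3" .
  have "\<forall>\<^sub>F k in sequentially. 2 \<le> N k \<and> 2 \<le> L k"
    using assms(6,7) by (simp add: filterlim_at_top eventually_conj)
  then have "\<forall>\<^sub>F k in sequentially. F (r k) (u k)
      = real (L k) * measure_pmf.variance (tasep_stationary (N k) (L k)) (tasep_phi \<mu> (N k) (L k))"
  proof eventually_elim
    case (elim k)
    then have "2 \<le> real (N k)" "2 \<le> real (L k)" by auto
    from scaled_variance_in_density[OF this, of \<mu>] show ?case
      unfolding variance_tasep_phi[OF conjunct1[OF elim] conjunct2[OF elim]] F_def r_def u_def
        of_nat_add
      by (rule sym)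
  qed
  with limit show ?thesis
    by (rule Lim_transform_eventually)
qed

end
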